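(* Let $v_1,\dots,v_n$ be distinct real numbers, $s_1,\dots,s_n\in[0,1)$, and $\gamma\in[0,1]$. Then there exist $t\in\mathbb{R}$ and $\alpha\in[0,1]$ such that, for the sector $S=S_{\alpha,\alpha+\gamma}$ of aperture $\gamma$, $$\big|N_S(s_1+v_1t,\dots,s_n+v_nt)-\gamma n\big|\ \ge\ \sqrt{(\gamma-\gamma^2)n}.$$ In particular, there exists $t\in\mathbb{R}$ with $B(s_1+v_1t,\dots,s_n+v_nt)\ge\sqrt n/2$.
   Context: For $r\in\mathbb{R}$, $\{r\}:=r-\lfloor r\rfloor$. For $\alpha\in\mathbb{R}$, $\gamma\in[0,1]$, the sector $S_{\alpha,\alpha+\gamma}:=\{x\in[0,1]:\{x-\alpha\}\le\gamma\}$, of aperture $\gamma$. For a sector $S$ and $x_1,\dots,x_n\in\mathbb{R}$, $N_S(x_1,\dots,x_n):=|\{i:\{x_i\}\in S\}|$. For $r_1,\dots,r_n\in\mathbb{R}$, the bias is $B(r_1,\dots,r_n):=\sup_{0\le a\le b\le1}\big|\,|\{i:\{r_i\}\in[a,b]\}|-n(b-a)\big|$. *)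

theory Defs
  imports Complex_Main
begin

definition sector :: "real \<Rightarrow> real \<Rightarrow> real set" where
  "sector \<alpha> \<gamma> = {x \<in> {0..1}. frac (x - \<alpha>) \<le> \<gamma>}"

text \<open>N_S(x_1,...,x_n), points indexed by 0..n-1.\<close>
definition N_S :: "real set \<Rightarrow> nat \<Rightarrow> (nat \<Rightarrow> real) \<Rightarrow> nat" where
  "N_S S n x = card {i \<in> {..<n}. frac (x i) \<in> S}"

text \<open>Bias B(r_1,...,r_n), points indexed by 0..n-1.\<close>
definition bias :: "nat \<Rightarrow> (nat \<Rightarrow> real) \<Rightarrow> real" where
  "bias n r = (SUP ab \<in> {(a, b). 0 \<le> a \<and> a \<le> b \<and> b \<le> (1::real)}.
      \<bar>real (card {i \<in> {..<n}. frac (r i) \<in> {fst ab..snd ab}}) - real n * (snd ab - fst ab)\<bar>)"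

end

theory Submission
  imports Defs "HOL-Analysis.Analysis"
begin

text \<open>Suppose every arc of aperture \<open>\<gamma>\<close> had deviation below \<open>\<surd>((\<gamma> - \<gamma>\<^sup>2) n)\<close> at every
  time \<open>t\<close>. The counts are integers, so the squared deviation is then uniformly at most some
  \<open>m < (\<gamma> - \<gamma>\<^sup>2) n\<close>. Averaging it over the rotation \<open>\<alpha>\<close> gives \<open>\<Sum>\<^sub>i\<^sub>,\<^sub>j K (x\<^sub>i t - x\<^sub>j t)\<close>, where
  \<open>K y = |[0, \<gamma>] \<inter> ([0, \<gamma>] + y)| - \<gamma>\<^sup>2\<close> is the centred autocorrelation of the arc on \<open>\<real>/\<int>\<close>;
  the diagonal contributes \<open>(\<gamma> - \<gamma>\<^sup>2) n\<close>, so the off-diagonal pair sum stays below the negative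
  constant \<open>m - (\<gamma> - \<gamma>\<^sup>2) n\<close> for all \<open>t\<close>. But \<open>K\<close> has mean zero, hence a bounded periodic
  primitive \<open>G\<close>, and since the velocities are distinct the pair sum is the derivative of the
  bounded function \<open>t \<mapsto> \<Sum>\<^sub>i\<^sub>\<noteq>\<^sub>j G (x\<^sub>i t - x\<^sub>j t) / (v\<^sub>i - v\<^sub>j)\<close>, a contradiction. The bias bound
  is the case \<open>\<gamma> = 1/2\<close>: a half-circle arc is an interval or the complement of one.\<close>

lemma has_field_derivative_at_split:
  fixes f :: "real \<Rightarrow> real"
  assumes "(f has_field_derivative D) (at x within {..x})"
    and "(f has_field_derivative D) (at x within {x..})"
  shows "(f has_field_derivative D) (at x)"
proof -
  have "UNIV = {..x} \<union> {x..}" by auto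
  then show ?thesis
    using assms unfolding has_field_derivative_iff by (metis Lim_within_Un)
qed

definition pos_part_sq_half :: "real \<Rightarrow> real" where
  "pos_part_sq_half x = (max 0 x)\<^sup>2 / 2"

lemma DERIV_pos_part_sq_half: "(pos_part_sq_half has_field_derivative max 0 x) (at x)"
proof -
  have square: "((\<lambda>y. y\<^sup>2 / 2) has_field_derivative x) (at x within S)" for S
    using DERIV_cdivide[OF DERIV_pow[of 2 x S], of 2] by simp
  consider "x < 0" | "x = 0" | "x > 0" by linarith
  then show ?thesis
  proof cases
    case 1
    have "((\<lambda>y. 0) has_field_derivative max 0 x) (at x)"
      using 1 by (auto intro: derivative_eq_intros)
    then show ?thesis
      by (rule has_field_derivative_transform_within_open[where S="{..<0}"])
        (use 1 in \<open>auto simp: pos_part_sq_half_def\<close>)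
  next
    case 2
    have "((\<lambda>y. 0) has_field_derivative 0) (at x within {..x})" by (rule derivative_intros)
    then have left: "(pos_part_sq_half has_field_derivative 0) (at x within {..x})"
      by (rule has_field_derivative_transform_within[where d=1])
        (use 2 in \<open>auto simp: pos_part_sq_half_def\<close>)
    have right: "(pos_part_sq_half has_field_derivative 0) (at x within {x..})"
      using square[of "{x..}"] 2
      by (rule_tac has_field_derivative_transform_within[where d=1])
        (auto simp: pos_part_sq_half_def)
    show ?thesis using has_field_derivative_at_split[OF left right] 2 by simp
  next
    case 3
    then show ?thesis
      using square[of UNIV]
      by (rule_tac has_field_derivative_transform_within_open[where S="{0<..}"])
        (auto simp: pos_part_sq_half_def)
  qed
qed

text \<open>For \<open>0 \<le> d < 1\<close>, \<open>arc_overlap \<gamma> d\<close> is the length of the intersection of the arcs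
  \<open>[0, \<gamma>]\<close> and \<open>[d, d + \<gamma>]\<close> of the circle \<open>\<real>/\<int>\<close>.\<close>
definition arc_overlap :: "real \<Rightarrow> real \<Rightarrow> real" where
  "arc_overlap \<gamma> d = max 0 (\<gamma> - d) + max 0 (d + \<gamma> - 1)"

definition arc_overlap_primitive :: "real \<Rightarrow> real \<Rightarrow> real" where
  "arc_overlap_primitive \<gamma> d =
     \<gamma>\<^sup>2 / 2 - pos_part_sq_half (\<gamma> - d) + pos_part_sq_half (d + \<gamma> - 1) - \<gamma>\<^sup>2 * d"

lemma DERIV_arc_overlap_primitive:
  "(arc_overlap_primitive \<gamma> has_field_derivative arc_overlap \<gamma> d - \<gamma>\<^sup>2) (at d)"
proof -
  have "((\<lambda>z. pos_part_sq_half (\<gamma> - z)) has_field_derivative max 0 (\<gamma> - d) * (0 - 1)) (at d)"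
    by (intro DERIV_chain2[OF DERIV_pos_part_sq_half] derivative_eq_intros) auto
  moreover have "((\<lambda>z. pos_part_sq_half (z + \<gamma> - 1)) has_field_derivative
      max 0 (d + \<gamma> - 1) * (1 + 0 - 0)) (at d)"
    by (intro DERIV_chain2[OF DERIV_pos_part_sq_half] derivative_eq_intros) auto
  ultimately have "(arc_overlap_primitive \<gamma> has_field_derivative
      0 - max 0 (\<gamma> - d) * (0 - 1) + max 0 (d + \<gamma> - 1) * (1 + 0 - 0) - \<gamma>\<^sup>2 * 1) (at d)"
    unfolding arc_overlap_primitive_def [abs_def]
    by (intro DERIV_diff DERIV_add DERIV_const DERIV_cmult DERIV_ident)
  then show ?thesis by (simp add: arc_overlap_def)
qed

lemma arc_overlap_primitive_0_1:
  assumes "0 \<le> \<gamma>" "\<gamma> \<le> 1"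
  shows "arc_overlap_primitive \<gamma> 0 = 0" "arc_overlap_primitive \<gamma> 1 = 0"
  using assms by (simp_all add: arc_overlap_primitive_def pos_part_sq_half_def max_def power2_eq_square)

lemma abs_arc_overlap_primitive_le:
  assumes "0 \<le> \<gamma>" "\<gamma> \<le> 1" "0 \<le> d" "d \<le> 1"
  shows "\<bar>arc_overlap_primitive \<gamma> d\<bar> \<le> 2"
proof -
  have bound: "0 \<le> pos_part_sq_half x \<and> pos_part_sq_half x \<le> 1" if "x \<le> 1" for x
    using that mult_le_one[of "max 0 x" "max 0 x"]
    by (auto simp: pos_part_sq_half_def power2_eq_square)
  have "0 \<le> \<gamma>\<^sup>2 * d" "\<gamma>\<^sup>2 * d \<le> 1" "0 \<le> \<gamma>\<^sup>2" "\<gamma>\<^sup>2 \<le> 1"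
    using assms by (auto simp: power2_eq_square mult_le_one)
  with bound[of "\<gamma> - d"] bound[of "d + \<gamma> - 1"] assms show ?thesis
    unfolding arc_overlap_primitive_def abs_le_iff by linarith
qed

lemma frac_eq_diff_Ints: "j \<in> \<int> \<Longrightarrow> j \<le> z \<Longrightarrow> z < j + 1 \<Longrightarrow> frac z = z - j"
  by (simp add: frac_unique_iff)

lemma DERIV_comp_frac:
  fixes P P' :: "real \<Rightarrow> real"
  assumes deriv: "\<And>d. (P has_field_derivative P' d) (at d)"
    and "P 0 = P 1" and "P' 0 = P' 1"
  shows "((\<lambda>y. P (frac y)) has_field_derivative P' (frac y)) (at y)"
proof -
  have shifted: "((\<lambda>z. P (z - c)) has_field_derivative P' (y - c)) (at y within S)" for c S
  proof -
    have "((\<lambda>z. P (z - c)) has_field_derivative P' (y - c) * (1 - 0)) (at y within S)"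
      by (intro DERIV_chain2[OF deriv] derivative_eq_intros) auto
    then show ?thesis by simp
  qed
  define k where "k = real_of_int \<lfloor>y\<rfloor>"
  have k: "k \<in> \<int>" "k \<le> y" "y < k + 1"
    unfolding k_def by (simp_all add: real_of_int_floor_add_one_gt)
  have right: "((\<lambda>y. P (frac y)) has_field_derivative P' (y - k)) (at y within {y..})"
  proof (rule has_field_derivative_transform_within[OF shifted, where d="k + 1 - y"])
    fix z assume "z \<in> {y..}" "dist z y < k + 1 - y"
    then have "k \<le> z" "z < k + 1" using k by (auto simp: dist_real_def)
    then show "P (z - k) = P (frac z)" using frac_eq_diff_Ints[OF k(1)] by simp
  qed (use k in auto)
  have left: "((\<lambda>y. P (frac y)) has_field_derivative P' (y - k)) (at y within {..y})"
  proof (cases "y = k")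
    case True
    have "((\<lambda>y. P (frac y)) has_field_derivative P' (y - (k - 1))) (at y within {..y})"
    proof (rule has_field_derivative_transform_within[OF shifted, where d=1])
      fix z assume z: "z \<in> {..y}" "dist z y < 1"
      show "P (z - (k - 1)) = P (frac z)"
      proof (cases "z = y")
        case True
        moreover have "frac k = 0" using k(1) by simp
        ultimately show ?thesis using \<open>y = k\<close> assms(2) by (simp del: frac_eq_0_iff)
      next
        case False
        with z \<open>y = k\<close> have "k - 1 \<le> z" "z < k - 1 + 1" by (auto simp: dist_real_def)
        then show ?thesis using frac_eq_diff_Ints[of "k - 1"] k(1) by simp
      qed
    qed auto
    then show ?thesis using True assms(3) by simp
  next
    case False
    show ?thesis
    proof (rule has_field_derivative_transform_within[OF shifted, where d="y - k"])
      fix z assume "z \<in> {..y}" "dist z y < y - k"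
      then have "k \<le> z" "z < k + 1" using k by (auto simp: dist_real_def)
      then show "P (z - k) = P (frac z)" using frac_eq_diff_Ints[OF k(1)] by simp
    qed (use k False in auto)
  qed
  show ?thesis
    using has_field_derivative_at_split[OF left right] frac_eq_diff_Ints[OF k] by simp
qed

lemma DERIV_arc_overlap_potential:
  assumes "0 \<le> \<gamma>" "\<gamma> \<le> 1"
  shows "((\<lambda>y. arc_overlap_primitive \<gamma> (frac y)) has_field_derivative
           arc_overlap \<gamma> (frac y) - \<gamma>\<^sup>2) (at y)"
  by (rule DERIV_comp_frac[OF DERIV_arc_overlap_primitive])
    (use assms arc_overlap_primitive_0_1 in \<open>auto simp: arc_overlap_def\<close>)

lemma DERIV_bounded_ex_gt_neg:
  fixes H H' :: "real \<Rightarrow> real"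
  assumes deriv: "\<And>t. (H has_field_derivative H' t) (at t)"
    and bound: "\<And>t. \<bar>H t\<bar> \<le> L" and "0 < \<delta>"
  shows "\<exists>t. - \<delta> < H' t"
proof (rule ccontr)
  assume "\<nexists>t. - \<delta> < H' t"
  then have le: "H' t \<le> - \<delta>" for t by (meson not_le)
  define T where "T = (2 * L + 1) / \<delta>"
  have "0 \<le> L" using bound[of 0] by simp
  then have "0 < T" using \<open>0 < \<delta>\<close> by (simp add: T_def)
  then obtain z where "H T - H 0 = (T - 0) * H' z"
    using MVT2[of 0 T H H'] deriv by blast
  also have "\<dots> \<le> T * - \<delta>" using mult_left_mono[OF le[of z], of T] \<open>0 < T\<close> by simp
  also have "\<dots> = - (2 * L + 1)" using \<open>0 < \<delta>\<close> by (simp add: T_def)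
  finally show False using bound[of T] bound[of 0] by linarith
qed

lemma ex_time_pair_sum_gt_neg:
  fixes G F :: "real \<Rightarrow> real" and v s :: "nat \<Rightarrow> real"
  assumes inj: "inj_on v {..<n}"
    and deriv: "\<And>y. (G has_field_derivative F y) (at y)"
    and bound: "\<And>y. \<bar>G y\<bar> \<le> B" and "0 < \<delta>"
  shows "\<exists>t. - \<delta> < (\<Sum>i<n. \<Sum>j\<in>{..<n} - {i}. F ((s i + v i * t) - (s j + v j * t)))"
proof -
  define x where "x i t = s i + v i * t" for i t
  define H where "H t = (\<Sum>i<n. \<Sum>j\<in>{..<n} - {i}. G (x i t - x j t) / (v i - v j))" for t
  have v_diff: "v i - v j \<noteq> 0" if "i < n" "j \<in> {..<n} - {i}" for i j
    using inj that by (auto dest: inj_onD)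
  have deriv_H: "(H has_field_derivative (\<Sum>i<n. \<Sum>j\<in>{..<n} - {i}. F (x i t - x j t))) (at t)" for t
  proof -
    have "((\<lambda>t. G (x i t - x j t) / (v i - v j)) has_field_derivative
        F (x i t - x j t) * (v i - v j) / (v i - v j)) (at t)" for i j
    proof -
      have "((\<lambda>t. x i t - x j t) has_field_derivative v i - v j) (at t)"
        unfolding x_def by (auto intro!: derivative_eq_intros simp: algebra_simps)
      from DERIV_chain2[OF deriv this] show ?thesis by (rule DERIV_cdivide)
    qed
    then have "(H has_field_derivative
        (\<Sum>i<n. \<Sum>j\<in>{..<n} - {i}. F (x i t - x j t) * (v i - v j) / (v i - v j))) (at t)"
      unfolding H_def [abs_def] by (intro DERIV_sum)
    also have "(\<Sum>i<n. \<Sum>j\<in>{..<n} - {i}. F (x i t - x j t) * (v i - v j) / (v i - v j))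
        = (\<Sum>i<n. \<Sum>j\<in>{..<n} - {i}. F (x i t - x j t))"
      using v_diff by (intro sum.cong refl) auto
    finally show ?thesis .
  qed
  have bound_H: "\<bar>H t\<bar> \<le> (\<Sum>i<n. \<Sum>j\<in>{..<n} - {i}. B / \<bar>v i - v j\<bar>)" for t
  proof -
    have "\<bar>H t\<bar> \<le> (\<Sum>i<n. \<Sum>j\<in>{..<n} - {i}. \<bar>G (x i t - x j t) / (v i - v j)\<bar>)"
      unfolding H_def by (rule order.trans[OF sum_abs sum_mono[OF sum_abs]])
    also have "\<dots> \<le> (\<Sum>i<n. \<Sum>j\<in>{..<n} - {i}. B / \<bar>v i - v j\<bar>)"
      using bound v_diff by (intro sum_mono) (simp add: abs_divide divide_right_mono)
    finally show ?thesis .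
  qed
  from DERIV_bounded_ex_gt_neg[OF deriv_H bound_H \<open>0 < \<delta>\<close>] show ?thesis
    unfolding x_def .
qed

lemma has_integral_unit_period:
  fixes f :: "real \<Rightarrow> 'a::banach"
  assumes per: "\<And>x. f (x + 1) = f x" and int: "(f has_integral I) {0..1}"
  shows "(f has_integral I) {c..c + 1}"
proof -
  interpret periodic_fun_simple' f by standard (rule per)
  define r where "r = frac c"
  have r: "0 \<le> r" "r < 1" by (simp_all add: r_def frac_lt_1)
  have "f integrable_on {0..1}" using int by blast
  then have lower: "(f has_integral integral {0..r} f) {0..r}"
    and upper: "(f has_integral integral {r..1} f) {r..1}"
    using r by (auto intro!: integrable_integral elim: integrable_subinterval_real)
  have "integral {0..r} f + integral {r..1} f = I"
    using has_integral_unique[OF has_integral_combine[OF _ _ lower upper] int] r by simp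
  moreover have "(f has_integral integral {0..r} f) {1..r + 1}"
    using has_integral_shift_real_ivl[OF lower, of "-1"] by (simp add: minus_1)
  then have "(f has_integral integral {r..1} f + integral {0..r} f) {r..r + 1}"
    using r by (intro has_integral_combine[OF _ _ upper]) auto
  ultimately have "(f has_integral I) {r..r + 1}"
    by (simp add: add.commute)
  from has_integral_shift_real_ivl[OF this, of "- of_int \<lfloor>c\<rfloor>"]
  show ?thesis
    by (simp add: r_def frac_def minus_of_int)
qed

definition arc_indicator :: "real \<Rightarrow> real \<Rightarrow> real" where
  "arc_indicator \<gamma> u = (if frac u \<le> \<gamma> then 1 else 0)"

lemma arc_indicator_plus_1 [simp]: "arc_indicator \<gamma> (u + 1) = arc_indicator \<gamma> u"
  by (simp add: arc_indicator_def frac_1_eq)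

lemma has_integral_indicator_subinterval:
  assumes "0 \<le> p" "q \<le> 1"
  shows "((\<lambda>u. if u \<in> {p..q} then 1 else 0 :: real) has_integral max 0 (q - p)) {0..1}"
proof (cases "p \<le> q")
  case True
  then show ?thesis
    using has_integral_restrict_closed_subinterval[OF has_integral_const[of "1::real" p q]] assms
    by (simp add: cbox_interval)
qed simp

lemma has_integral_arc_indicator_correlation_0:
  assumes "0 \<le> \<gamma>" "\<gamma> < 1"
  shows "((\<lambda>u. arc_indicator \<gamma> (u + d) * arc_indicator \<gamma> u) has_integral
           arc_overlap \<gamma> (frac d)) {0..1}"
proof -
  define e where "e = frac d"
  have e: "0 \<le> e" "e < 1" by (simp_all add: e_def frac_lt_1)
  have "((\<lambda>u. (if u \<in> {0..\<gamma> - e} then 1 else 0) + (if u \<in> {1 - e..\<gamma>} then 1 else 0) :: real)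
      has_integral max 0 (\<gamma> - e - 0) + max 0 (\<gamma> - (1 - e))) {0..1}"
    using assms e by (intro has_integral_add has_integral_indicator_subinterval) auto
  moreover have "arc_indicator \<gamma> (u + d) * arc_indicator \<gamma> u =
      (if u \<in> {0..\<gamma> - e} then 1 else 0) + (if u \<in> {1 - e..\<gamma>} then 1 else 0)"
    if "u \<in> {0..1} - {1}" for u
  proof -
    have u: "0 \<le> u" "u < 1" using that by auto
    have "frac (u + d) = frac (u + e)" by (simp add: e_def)
    also have "\<dots> = (if u + e < 1 then u + e else u + e - 1)"
      using u e by (auto simp: frac_eq frac_unique_iff)
    finally show ?thesis using u e assms by (auto simp: arc_indicator_def frac_eq)
  qed
  ultimately have "((\<lambda>u. arc_indicator \<gamma> (u + d) * arc_indicator \<gamma> u) has_integral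
      max 0 (\<gamma> - e - 0) + max 0 (\<gamma> - (1 - e))) {0..1}"
    by (rule_tac has_integral_spike[of "{1}"]) auto
  then show ?thesis by (simp add: arc_overlap_def e_def algebra_simps)
qed

lemma has_integral_arc_indicator_correlation:
  assumes "0 \<le> \<gamma>" "\<gamma> < 1"
  shows "((\<lambda>\<alpha>. arc_indicator \<gamma> (a - \<alpha>) * arc_indicator \<gamma> (b - \<alpha>)) has_integral
           arc_overlap \<gamma> (frac (a - b))) {0..1}"
proof -
  define q where "q u = arc_indicator \<gamma> (u + (a - b)) * arc_indicator \<gamma> u" for u
  have "q (u + 1) = q u" for u
  proof -
    have "u + 1 + (a - b) = u + (a - b) + 1" by simp
    then show ?thesis by (simp only: q_def arc_indicator_plus_1)
  qed
  moreover have "(q has_integral arc_overlap \<gamma> (frac (a - b))) {0..1}"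
    unfolding q_def by (rule has_integral_arc_indicator_correlation_0[OF assms])
  ultimately have "(q has_integral arc_overlap \<gamma> (frac (a - b))) {b - 1..b}"
    using has_integral_unit_period[of q _ "b - 1"] by simp
  then have "((\<lambda>\<alpha>. q (- \<alpha>)) has_integral arc_overlap \<gamma> (frac (a - b))) {- b..1 - b}"
    by (simp add: has_integral_reflect_real[of q, symmetric])
  from has_integral_shift_real_ivl[OF this, of "- b"]
  show ?thesis by (simp add: q_def)
qed

lemma has_integral_arc_count_deviation_sq:
  fixes y :: "nat \<Rightarrow> real"
  assumes "0 \<le> \<gamma>" "\<gamma> < 1"
  shows "((\<lambda>\<alpha>. ((\<Sum>i<n. arc_indicator \<gamma> (y i - \<alpha>)) - \<gamma> * real n)\<^sup>2) has_integral
           (\<Sum>i<n. \<Sum>j<n. arc_overlap \<gamma> (frac (y i - y j)) - \<gamma>\<^sup>2)) {0..1}"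
proof -
  define N where "N \<alpha> = (\<Sum>i<n. arc_indicator \<gamma> (y i - \<alpha>))" for \<alpha>
  have products: "((\<lambda>\<alpha>. \<Sum>i<n. \<Sum>j<n. arc_indicator \<gamma> (y i - \<alpha>) * arc_indicator \<gamma> (y j - \<alpha>))
      has_integral (\<Sum>i<n. \<Sum>j<n. arc_overlap \<gamma> (frac (y i - y j)))) {0..1}"
    by (intro has_integral_sum has_integral_arc_indicator_correlation[OF assms]) auto
  have "((\<lambda>\<alpha>. arc_indicator \<gamma> (y i - \<alpha>)) has_integral \<gamma>) {0..1}" for i
  proof -
    have idem: "arc_indicator \<gamma> u * arc_indicator \<gamma> u = arc_indicator \<gamma> u" for u
      by (simp add: arc_indicator_def)
    show ?thesis
      using has_integral_arc_indicator_correlation[OF assms, of "y i" "y i"] assms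
      unfolding idem by (simp add: arc_overlap_def)
  qed
  then have "(N has_integral (\<Sum>i<n. \<gamma>)) {0..1}"
    unfolding N_def [abs_def] by (intro has_integral_sum) auto
  then have "(N has_integral \<gamma> * real n) {0..1}" by (simp add: mult.commute)
  from has_integral_add[OF has_integral_diff[OF products has_integral_mult_right[OF this, of "2 * \<gamma> * n"]]
      has_integral_const_real[of "(\<gamma> * n)\<^sup>2" 0 1]]
  have "((\<lambda>\<alpha>. N \<alpha> * N \<alpha> - 2 * \<gamma> * n * N \<alpha> + (\<gamma> * n)\<^sup>2) has_integral
      (\<Sum>i<n. \<Sum>j<n. arc_overlap \<gamma> (frac (y i - y j))) - (\<gamma> * n)\<^sup>2) {0..1}"
    unfolding N_def sum_product by (simp add: power2_eq_square algebra_simps)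
  then show ?thesis
    unfolding N_def [symmetric]
    by (simp add: power2_eq_square algebra_simps sum_subtractf sum_distrib_left)
qed

lemma ex_less_bound_finite_image:
  fixes f :: "'a \<Rightarrow> real"
  assumes "finite (f ` A)" and "\<And>x. x \<in> A \<Longrightarrow> f x < c"
  shows "\<exists>m < c. \<forall>x\<in>A. f x \<le> m"
proof (cases "A = {}")
  case False
  then have "Max (f ` A) \<in> f ` A" using assms(1) by (intro Max_in) auto
  then show ?thesis using assms by (intro exI[of _ "Max (f ` A)"]) auto
qed (auto intro: exI[of _ "c - 1"])

lemma sum_diag_offdiag:
  fixes n :: nat
  shows "(\<Sum>i<n. \<Sum>j<n. f i j) = (\<Sum>i<n. f i i) + (\<Sum>i<n. \<Sum>j\<in>{..<n} - {i}. f i j)"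
  unfolding sum.distrib [symmetric] by (rule sum.cong[OF refl], rule sum.remove) auto

lemma N_S_le: "N_S S n x \<le> n"
  unfolding N_S_def by (rule order.trans[OF card_mono[of "{..<n}"]]) auto

lemma N_S_mono: "S \<subseteq> T \<Longrightarrow> N_S S n x \<le> N_S T n x"
  unfolding N_S_def by (rule card_mono) auto

lemma N_S_cong:
  assumes "\<And>q. 0 \<le> q \<Longrightarrow> q < 1 \<Longrightarrow> q \<in> S \<longleftrightarrow> q \<in> T"
  shows "N_S S n x = N_S T n x"
  unfolding N_S_def using assms frac_lt_1 by (metis frac_ge_0)

lemma N_S_Compl: "N_S (- S) n x = n - N_S S n x"
proof -
  have "card {i \<in> {..<n}. frac (x i) \<in> - S} = card ({..<n} - {i \<in> {..<n}. frac (x i) \<in> S})"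
    by (rule arg_cong[where f=card]) auto
  also have "\<dots> = n - card {i \<in> {..<n}. frac (x i) \<in> S}"
    by (subst card_Diff_subset) auto
  finally show ?thesis unfolding N_S_def .
qed

lemma frac_mem_sector_iff: "frac x \<in> sector \<alpha> \<gamma> \<longleftrightarrow> frac (x - \<alpha>) \<le> \<gamma>"
  using frac_lt_1[of x] frac_add_simps(1)[of x "- \<alpha>"] by (auto simp: sector_def)

lemma real_N_S_sector: "real (N_S (sector \<alpha> \<gamma>) n x) = (\<Sum>i<n. arc_indicator \<gamma> (x i - \<alpha>))"
proof -
  have "real (N_S (sector \<alpha> \<gamma>) n x) = real (card {i \<in> {..<n}. frac (x i - \<alpha>) \<le> \<gamma>})"
    by (simp add: N_S_def frac_mem_sector_iff)
  also have "\<dots> = (\<Sum>i<n. arc_indicator \<gamma> (x i - \<alpha>))"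
    by (simp add: arc_indicator_def sum.If_cases Int_def)
  finally show ?thesis .
qed

lemma ex_time_sector_deviation_sq_ge:
  fixes v s :: "nat \<Rightarrow> real"
  assumes inj: "inj_on v {..<n}" and "0 \<le> \<gamma>" "\<gamma> \<le> 1"
  shows "\<exists>t \<alpha>. 0 \<le> \<alpha> \<and> \<alpha> \<le> 1 \<and>
           (\<gamma> - \<gamma>\<^sup>2) * n \<le> (real (N_S (sector \<alpha> \<gamma>) n (\<lambda>i. s i + v i * t)) - \<gamma> * n)\<^sup>2"
proof (cases "\<gamma> = 1")
  case False
  then have "\<gamma> < 1" using assms by simp
  define x where "x t = (\<lambda>i. s i + v i * t)" for t
  define D where "D t \<alpha> = (real (N_S (sector \<alpha> \<gamma>) n (x t)) - \<gamma> * n)\<^sup>2" for t \<alpha>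
  show ?thesis
  proof (rule ccontr)
    assume "\<not> ?thesis"
    then have "D t \<alpha> < (\<gamma> - \<gamma>\<^sup>2) * n" if "\<alpha> \<in> {0..1}" for t \<alpha>
      using that unfolding D_def x_def by (meson atLeastAtMost_iff not_le)
    then have "(\<lambda>(t, \<alpha>). D t \<alpha>) p < (\<gamma> - \<gamma>\<^sup>2) * n" if "p \<in> UNIV \<times> {0..1}" for p
      using that by auto
    moreover have "finite ((\<lambda>(t, \<alpha>). D t \<alpha>) ` (UNIV \<times> {0..1}))"
      by (rule finite_subset[of _ "(\<lambda>k. (real k - \<gamma> * n)\<^sup>2) ` {..n}"])
        (auto simp: D_def N_S_le)
    ultimately obtain m where "m < (\<gamma> - \<gamma>\<^sup>2) * n"
      and m: "\<forall>p \<in> UNIV \<times> {0..1}. (\<lambda>(t, \<alpha>). D t \<alpha>) p \<le> m"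
      using ex_less_bound_finite_image by blast
    have offdiag: "(\<Sum>i<n. \<Sum>j\<in>{..<n} - {i}. arc_overlap \<gamma> (frac (x t i - x t j)) - \<gamma>\<^sup>2)
        \<le> m - (\<gamma> - \<gamma>\<^sup>2) * n" for t
    proof -
      have "(\<Sum>i<n. \<Sum>j<n. arc_overlap \<gamma> (frac (x t i - x t j)) - \<gamma>\<^sup>2) \<le> m"
        using has_integral_le[OF has_integral_arc_count_deviation_sq[OF \<open>0 \<le> \<gamma>\<close> \<open>\<gamma> < 1\<close>]
            has_integral_const_real[of m 0 1]] m
        by (simp add: D_def real_N_S_sector)
      moreover have "(\<Sum>i<n. arc_overlap \<gamma> (frac (x t i - x t i)) - \<gamma>\<^sup>2) = (\<gamma> - \<gamma>\<^sup>2) * n"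
        using assms by (simp add: arc_overlap_def)
      ultimately show ?thesis
        using sum_diag_offdiag[of "\<lambda>i j. arc_overlap \<gamma> (frac (x t i - x t j)) - \<gamma>\<^sup>2" n] by linarith
    qed
    have "\<bar>arc_overlap_primitive \<gamma> (frac y)\<bar> \<le> 2" for y
      using abs_arc_overlap_primitive_le[OF assms(2,3)] frac_lt_1[of y] by simp
    from ex_time_pair_sum_gt_neg[OF inj DERIV_arc_overlap_potential[OF assms(2,3)] this,
        where \<delta>="(\<gamma> - \<gamma>\<^sup>2) * n - m" and s=s] \<open>m < (\<gamma> - \<gamma>\<^sup>2) * n\<close>
    obtain t where "m - (\<gamma> - \<gamma>\<^sup>2) * n <
        (\<Sum>i<n. \<Sum>j\<in>{..<n} - {i}. arc_overlap \<gamma> (frac (x t i - x t j)) - \<gamma>\<^sup>2)"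
      unfolding x_def by auto
    with offdiag[of t] show False by linarith
  qed
qed (auto intro: exI[of _ 0])

lemma N_S_Icc_deviation_le_bias:
  assumes "0 \<le> a" "a \<le> b" "b \<le> 1"
  shows "\<bar>real (N_S {a..b} n x) - real n * (b - a)\<bar> \<le> bias n x"
proof -
  let ?F = "\<lambda>ab. \<bar>real (card {i \<in> {..<n}. frac (x i) \<in> {fst ab..snd ab}}) - real n * (snd ab - fst ab)\<bar>"
  have "bdd_above (?F ` {(a, b). 0 \<le> a \<and> a \<le> b \<and> b \<le> 1})"
  proof (rule bdd_aboveI2)
    fix ab :: "real \<times> real" assume "ab \<in> {(a, b). 0 \<le> a \<and> a \<le> b \<and> b \<le> 1}"
    then have "0 \<le> real n * (snd ab - fst ab)" "real n * (snd ab - fst ab) \<le> real n"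
      by (auto intro: mult_left_le)
    moreover have "card {i \<in> {..<n}. frac (x i) \<in> {fst ab..snd ab}} \<le> n"
      using N_S_le unfolding N_S_def .
    ultimately show "?F ab \<le> real n" by linarith
  qed
  from cSUP_upper[OF _ this, of "(a, b)"] assms show ?thesis
    by (simp add: bias_def N_S_def)
qed

lemma N_S_Ioo_deviation_le_bias:
  assumes "0 \<le> a" "a < b" "b \<le> 1"
  shows "\<bar>real (N_S {a<..<b} n x) - real n * (b - a)\<bar> \<le> bias n x"
proof -
  have "real (N_S {a<..<b} n x) \<le> real (N_S {a..b} n x)"
    by (intro of_nat_mono N_S_mono) auto
  then have "real (N_S {a<..<b} n x) \<le> real n * (b - a) + bias n x"
    using N_S_Icc_deviation_le_bias[of a b n x] assms by (simp add: abs_le_iff)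
  moreover have "real n * (b - a) - bias n x \<le> real (N_S {a<..<b} n x)"
  proof (rule field_le_epsilon)
    fix e :: real assume "0 < e"
    define \<epsilon> where "\<epsilon> = min ((b - a) / 2) (e / (2 * real n + 1))"
    have "0 < \<epsilon>" using \<open>0 < e\<close> assms by (simp add: \<epsilon>_def)
    have "\<epsilon> \<le> (b - a) / 2" "\<epsilon> \<le> e / (2 * real n + 1)"
      unfolding \<epsilon>_def by (rule min.cobounded1, rule min.cobounded2)
    then have "2 * \<epsilon> \<le> b - a" by simp
    have "\<epsilon> * (2 * real n + 1) \<le> e"
      using \<open>\<epsilon> \<le> e / (2 * real n + 1)\<close> by (simp add: pos_le_divide_eq)
    then have "2 * n * \<epsilon> \<le> e" using \<open>0 < \<epsilon>\<close> by (simp add: algebra_simps)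
    moreover have "real n * (b - a - 2 * \<epsilon>) - bias n x \<le> real (N_S {a + \<epsilon>..b - \<epsilon>} n x)"
      using N_S_Icc_deviation_le_bias[of "a + \<epsilon>" "b - \<epsilon>" n x] \<open>0 < \<epsilon>\<close> \<open>2 * \<epsilon> \<le> b - a\<close> assms
      by (simp add: abs_le_iff algebra_simps)
    moreover have "N_S {a + \<epsilon>..b - \<epsilon>} n x \<le> N_S {a<..<b} n x"
      using \<open>0 < \<epsilon>\<close> by (intro N_S_mono) auto
    ultimately show "real n * (b - a) - bias n x \<le> real (N_S {a<..<b} n x) + e"
      by (simp add: algebra_simps)
  qed
  ultimately show ?thesis by (simp add: abs_le_iff)
qed

lemma mem_sector_iff:
  assumes "0 \<le> q" "q < 1" "0 \<le> \<alpha>" "\<alpha> \<le> 1"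
  shows "q \<in> sector \<alpha> \<gamma> \<longleftrightarrow> \<alpha> \<le> q \<and> q \<le> \<alpha> + \<gamma> \<or> q \<le> \<alpha> + \<gamma> - 1"
proof -
  have "frac (q - \<alpha>) = (if \<alpha> \<le> q then q - \<alpha> else q - \<alpha> + 1)"
    using assms by (auto simp: frac_eq frac_unique_iff)
  with assms show ?thesis by (auto simp: sector_def)
qed

lemma N_S_half_sector_deviation_le_bias:
  assumes "0 \<le> \<alpha>" "\<alpha> \<le> 1"
  shows "\<bar>real (N_S (sector \<alpha> (1/2)) n x) - 1/2 * real n\<bar> \<le> bias n x"
proof (cases "\<alpha> < 1/2")
  case True
  then have "N_S (sector \<alpha> (1/2)) n x = N_S {\<alpha>..\<alpha> + 1/2} n x"
    using assms by (intro N_S_cong) (auto simp: mem_sector_iff)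
  then show ?thesis using N_S_Icc_deviation_le_bias[of \<alpha> "\<alpha> + 1/2" n x] True assms by simp
next
  case False
  then have "N_S (sector \<alpha> (1/2)) n x = N_S (- {\<alpha> - 1/2<..<\<alpha>}) n x"
    using assms by (intro N_S_cong) (auto simp: mem_sector_iff)
  then have "real (N_S (sector \<alpha> (1/2)) n x) = real n - real (N_S {\<alpha> - 1/2<..<\<alpha>} n x)"
    by (simp add: N_S_Compl N_S_le of_nat_diff)
  then show ?thesis
    using N_S_Ioo_deviation_le_bias[of "\<alpha> - 1/2" \<alpha> n x] False assms by (simp add: abs_le_iff)
qed

theorem theorem3p2:
  fixes n :: nat and v s :: "nat \<Rightarrow> real" and \<gamma> :: real
  assumes "inj_on v {..<n}"
    and "\<forall>i<n. 0 \<le> s i \<and> s i < 1"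
    and "0 \<le> \<gamma>" and "\<gamma> \<le> 1"
  shows "(\<exists>t::real. \<exists>\<alpha>::real. 0 \<le> \<alpha> \<and> \<alpha> \<le> 1 \<and>
            \<bar>real (N_S (sector \<alpha> \<gamma>) n (\<lambda>i. s i + v i * t)) - \<gamma> * real n\<bar>
              \<ge> sqrt ((\<gamma> - \<gamma>\<^sup>2) * real n))
       \<and> (\<exists>t::real. bias n (\<lambda>i. s i + v i * t) \<ge> sqrt (real n) / 2)"
proof -
  have deviation: "\<exists>t \<alpha>. 0 \<le> \<alpha> \<and> \<alpha> \<le> 1 \<and>
      sqrt ((g - g\<^sup>2) * n) \<le> \<bar>real (N_S (sector \<alpha> g) n (\<lambda>i. s i + v i * t)) - g * n\<bar>"
    if "0 \<le> g" "g \<le> 1" for g :: real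
    using ex_time_sector_deviation_sq_ge[OF assms(1) that, of s]
    by (metis real_sqrt_abs real_sqrt_le_mono)
  obtain t \<alpha> where "0 \<le> \<alpha>" "\<alpha> \<le> 1" and
    "sqrt ((1/2 - (1/2)\<^sup>2) * n) \<le> \<bar>real (N_S (sector \<alpha> (1/2)) n (\<lambda>i. s i + v i * t)) - 1/2 * n\<bar>"
    using deviation[of "1/2"] by auto
  moreover have "sqrt ((1/2 - (1/2)\<^sup>2) * n) = sqrt n / 2"
    by (simp add: real_sqrt_divide power2_eq_square)
  ultimately have "sqrt n / 2 \<le> bias n (\<lambda>i. s i + v i * t)"
    using N_S_half_sector_deviation_le_bias[of \<alpha> n "\<lambda>i. s i + v i * t"] by linarith
  with deviation[OF assms(3,4)] show ?thesis by blast
qed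

end
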